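(* Let $n,d,T$ be positive integers and let $\Phi_T:\mathbb{R}^{d\times n}\to\mathbb{R}^m$ be a 1-WL geometric model (as defined in the context) in which all the functions $\phi_t,\psi_t$ ($t=0,\dots,T-1$) and $\mathrm{ReadOut}$ are upper Lipschitz. Then $\Phi_T$ is Lipschitz with respect to $d_{\mathcal{D}}$: there exists $L>0$ such that $\|\Phi_T({X})-\Phi_T({Y})\|_2\leq L\, d_{\mathcal{D}}({X},{Y})$ for all ${X},{Y}\in\mathbb{R}^{d\times n}$.
   Context: A point set is ${X}\in\mathbb{R}^{d\times n}$ with columns $x_1,\dots,x_n\in\mathbb{R}^d$. A 1-WL geometric model with $T$ iterations is defined as follows: set $c_i^0=0$ for all $i\in[n]$, and for $t=0,\dots,T-1$, $$c_i^{t+1}=\phi_t\Big(c_i^t,\ \psi_t\big(\{\!\{(c_i^t,c_j^t,\|x_i-x_j\|_2)\mid j\in[n]\}\!\}\big)\Big),$$ and finally $\Phi_T({X})=\mathrm{ReadOut}(\{\!\{c_1^T,\dots,c_n^T\}\!\})$. Here $\phi_t$ are functions between Euclidean spaces, and $\psi_t$ and $\mathrm{ReadOut}$ are multiset functions, i.e. functions of a matrix whose columns are the multiset elements that are invariant to permuting these columns; Lipschitzness of a multiset function means Lipschitzness of this matrix function in the standard Euclidean sense. The Hard-Gromov-Wasserstein distance is $$d_{\mathcal{D}}({X},{Y})=\min_{\pi\in S_n}\sum_{i,j=1}^n\big|\,\|x_i-x_j\|_2-\|y_{\pi(i)}-y_{\pi(j)}\|_2\,\big|.$$ *)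

theory Defs
  imports "HOL-Analysis.Analysis" "HOL-Library.Multiset"
begin

text \<open>Vectors of R^k are represented as real lists of length k; a matrix whose
columns are the multiset elements is a list of columns (all of the same length).\<close>

definition lnorm :: "real list \<Rightarrow> real" where
  "lnorm x = sqrt (\<Sum>a\<leftarrow>x. a\<^sup>2)"

definition ldist :: "real list \<Rightarrow> real list \<Rightarrow> real" where
  "ldist x y = lnorm (map2 (-) x y)"

definition mdist :: "real list list \<Rightarrow> real list list \<Rightarrow> real" where
  "mdist A B = sqrt (\<Sum>(a, b)\<leftarrow>zip A B. (ldist a b)\<^sup>2)"

definition euclid_fun :: "nat \<Rightarrow> nat \<Rightarrow> (real list \<Rightarrow> real list) \<Rightarrow> bool" where
  "euclid_fun k l f \<longleftrightarrow> (\<forall>x. length x = k \<longrightarrow> length (f x) = l)"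

definition lipschitz_vec :: "nat \<Rightarrow> (real list \<Rightarrow> real list) \<Rightarrow> bool" where
  "lipschitz_vec k f \<longleftrightarrow> (\<exists>L. \<forall>x y. length x = k \<longrightarrow> length y = k \<longrightarrow>
      ldist (f x) (f y) \<le> L * ldist x y)"

definition is_matrix :: "nat \<Rightarrow> nat \<Rightarrow> real list list \<Rightarrow> bool" where
  "is_matrix k n A \<longleftrightarrow> length A = n \<and> (\<forall>a\<in>set A. length a = k)"

definition multiset_fun :: "nat \<Rightarrow> nat \<Rightarrow> nat \<Rightarrow> (real list list \<Rightarrow> real list) \<Rightarrow> bool" where
  "multiset_fun k n l F \<longleftrightarrow>
     (\<forall>A. is_matrix k n A \<longrightarrow> length (F A) = l) \<and>
     (\<forall>A B. is_matrix k n A \<longrightarrow> is_matrix k n B \<longrightarrow> mset A = mset B \<longrightarrow> F A = F B)"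

definition lipschitz_mat :: "nat \<Rightarrow> nat \<Rightarrow> (real list list \<Rightarrow> real list) \<Rightarrow> bool" where
  "lipschitz_mat k n F \<longleftrightarrow> (\<exists>L. \<forall>A B. is_matrix k n A \<longrightarrow> is_matrix k n B \<longrightarrow>
      ldist (F A) (F B) \<le> L * mdist A B)"

text \<open>Colors c_i^t of the 1-WL geometric model. k t is the color dimension at step t;
psi t is the multiset function, phi t acts on the concatenation (c_i^t, psi_t(...)).\<close>
fun wl_color :: "(nat \<Rightarrow> nat) \<Rightarrow> (nat \<Rightarrow> real list list \<Rightarrow> real list) \<Rightarrow>
    (nat \<Rightarrow> real list \<Rightarrow> real list) \<Rightarrow> nat \<Rightarrow> (nat \<Rightarrow> real^'d) \<Rightarrow> nat \<Rightarrow> nat \<Rightarrow> real list" where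
  "wl_color k psi phi n X 0 i = replicate (k 0) 0"
| "wl_color k psi phi n X (Suc t) i =
     phi t (wl_color k psi phi n X t i @
            psi t (map (\<lambda>j. wl_color k psi phi n X t i @ wl_color k psi phi n X t j @ [dist (X i) (X j)]) [0..<n]))"

definition wl_model :: "(nat \<Rightarrow> nat) \<Rightarrow> (nat \<Rightarrow> real list list \<Rightarrow> real list) \<Rightarrow>
    (nat \<Rightarrow> real list \<Rightarrow> real list) \<Rightarrow> (real list list \<Rightarrow> real list) \<Rightarrow> nat \<Rightarrow> nat \<Rightarrow>
    (nat \<Rightarrow> real^'d) \<Rightarrow> real list" where
  "wl_model k psi phi readout T n X = readout (map (\<lambda>i. wl_color k psi phi n X T i) [0..<n])"

text \<open>Hard-Gromov-Wasserstein distance; the point set X in R^(d x n) has columns X 0, ..., X (n-1).\<close>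
definition hard_GW :: "nat \<Rightarrow> (nat \<Rightarrow> real^'d) \<Rightarrow> (nat \<Rightarrow> real^'d) \<Rightarrow> real" where
  "hard_GW n X Y = Min {(\<Sum>i<n. \<Sum>j<n. \<bar>dist (X i) (X j) - dist (Y (\<pi> i)) (Y (\<pi> j))\<bar>) | \<pi>. \<pi> permutes {..<n}}"

end

theory Submission
  imports Defs
begin

text \<open>First measure how far X and Y are apart by the distortion
sum_{i,j} |dist (x_i, x_j) - dist (y_i, y_j)| of the identity matching. Each color update reads
only colors and pairwise distances, through Lipschitz maps, so by induction on t every color
c_i^t, and then the readout, moves by at most a constant times this distortion. Since the psi_t
and the readout are multiset functions, the model is invariant under relabelling the points;
relabelling Y by an optimal permutation turns the distortion into the Hard-Gromov-Wasserstein
distance.\<close>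

lemma ldist_nonneg: "ldist x y \<ge> 0"
  unfolding ldist_def lnorm_def by (intro real_sqrt_ge_zero sum_list_nonneg) auto

lemma ldist_self: "ldist x x = 0"
  unfolding ldist_def lnorm_def by (induction x) auto

lemma ldist_singleton: "ldist [a] [b] = \<bar>a - b\<bar>"
  by (simp add: ldist_def lnorm_def)

lemma ldist_append_le:
  assumes "length a = length c"
  shows "ldist (a @ b) (c @ d) \<le> ldist a c + ldist b d"
proof -
  let ?sq = "\<lambda>x y. \<Sum>z\<leftarrow>map2 (-) x y. z\<^sup>2 :: real"
  have "ldist (a @ b) (c @ d) = sqrt (?sq a c + ?sq b d)"
    using assms by (simp add: ldist_def lnorm_def)
  also have "\<dots> \<le> sqrt (?sq a c) + sqrt (?sq b d)"
    by (rule sqrt_add_le_add_sqrt) (auto intro!: sum_list_nonneg)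
  finally show ?thesis by (simp add: ldist_def lnorm_def)
qed

lemma mdist_nonneg: "mdist A B \<ge> 0"
  unfolding mdist_def by (intro real_sqrt_ge_zero sum_list_nonneg) auto

lemma mdist_map_le_sum:
  "mdist (map f [0..<n]) (map g [0..<n]) \<le> (\<Sum>j<n. ldist (f j) (g j))"
proof -
  have "mdist (map f [0..<n]) (map g [0..<n]) = L2_set (\<lambda>j. ldist (f j) (g j)) {..<n}"
    unfolding mdist_def L2_set_def
    by (simp add: zip_map_map zip_same_conv_map comp_def sum_list_distinct_conv_sum_set
        atLeast0LessThan)
  also have "\<dots> \<le> (\<Sum>j<n. ldist (f j) (g j))"
    by (rule L2_set_le_sum) (simp add: ldist_nonneg)
  finally show ?thesis .
qed

lemma lipschitz_vec_nonneg_const: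
  assumes "lipschitz_vec k f"
  shows "\<exists>L\<ge>0. \<forall>x y. length x = k \<longrightarrow> length y = k \<longrightarrow> ldist (f x) (f y) \<le> L * ldist x y"
proof -
  obtain L where L: "\<forall>x y. length x = k \<longrightarrow> length y = k \<longrightarrow> ldist (f x) (f y) \<le> L * ldist x y"
    using assms unfolding lipschitz_vec_def by blast
  have "ldist (f x) (f y) \<le> max 0 L * ldist x y" if "length x = k" "length y = k" for x y
    using L that order_trans[OF _ mult_right_mono[OF max.cobounded2[of L 0] ldist_nonneg]] by blast
  then show ?thesis
    by (intro exI[of _ "max 0 L"]) auto
qed

lemma lipschitz_mat_nonneg_const:
  assumes "lipschitz_mat k n F"
  shows "\<exists>L\<ge>0. \<forall>A B. is_matrix k n A \<longrightarrow> is_matrix k n B \<longrightarrow> ldist (F A) (F B) \<le> L * mdist A B"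
proof -
  obtain L where L: "\<forall>A B. is_matrix k n A \<longrightarrow> is_matrix k n B \<longrightarrow> ldist (F A) (F B) \<le> L * mdist A B"
    using assms unfolding lipschitz_mat_def by blast
  have "ldist (F A) (F B) \<le> max 0 L * mdist A B" if "is_matrix k n A" "is_matrix k n B" for A B
    using L that order_trans[OF _ mult_right_mono[OF max.cobounded2[of L 0] mdist_nonneg]] by blast
  then show ?thesis
    by (intro exI[of _ "max 0 L"]) auto
qed

lemma mset_map_permutes:
  assumes "\<pi> permutes {..<n}"
  shows "mset (map (h \<circ> \<pi>) [0..<n]) = mset (map h [0..<n])"
proof -
  have "mset (map \<pi> [0..<n]) = mset [0..<n]"
    using assms permutes_inj_on[OF assms] permutes_image[OF assms]
    by (metis atLeast0LessThan distinct_map distinct_upt mset_set_set set_map set_upt)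
  then show ?thesis
    by (metis image_mset.compositionality map_map mset_map)
qed

definition distortion :: "nat \<Rightarrow> (nat \<Rightarrow> 'a::metric_space) \<Rightarrow> (nat \<Rightarrow> 'a) \<Rightarrow> real" where
  "distortion n X Y = (\<Sum>i<n. \<Sum>j<n. \<bar>dist (X i) (X j) - dist (Y i) (Y j)\<bar>)"

lemma distortion_nonneg: "distortion n X Y \<ge> 0"
  by (simp add: distortion_def sum_nonneg)

lemma distortion_row_le:
  "i < n \<Longrightarrow> (\<Sum>j<n. \<bar>dist (X i) (X j) - dist (Y i) (Y j)\<bar>) \<le> distortion n X Y"
  unfolding distortion_def by (rule member_le_sum) (auto intro: sum_nonneg)

lemma hard_GW_attained:
  "\<exists>\<pi>. \<pi> permutes {..<n} \<and> hard_GW n X Y = distortion n X (Y \<circ> \<pi>)"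
proof -
  let ?P = "{\<pi>. \<pi> permutes {..<n}}"
  have "hard_GW n X Y = Min ((\<lambda>\<pi>. distortion n X (Y \<circ> \<pi>)) ` ?P)"
    unfolding hard_GW_def distortion_def by (rule arg_cong[where f = Min]) auto
  also have "\<dots> \<in> (\<lambda>\<pi>. distortion n X (Y \<circ> \<pi>)) ` ?P"
    by (intro Min_in) (simp_all add: finite_permutations, blast intro: permutes_id)
  finally show ?thesis by blast
qed

lemma message_matrix_mdist_le:
  assumes "\<And>j. j < n \<Longrightarrow> length (cX j) = length (cY j)"
    and "\<And>j. j < n \<Longrightarrow> ldist (cX j) (cY j) \<le> a"
    and "i < n"
  shows "mdist (map (\<lambda>j. cX i @ cX j @ [dX j]) [0..<n]) (map (\<lambda>j. cY i @ cY j @ [dY j]) [0..<n])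
           \<le> 2 * real n * a + (\<Sum>j<n. \<bar>dX j - dY j\<bar>)"
proof -
  have row: "ldist (cX i @ cX j @ [dX j]) (cY i @ cY j @ [dY j]) \<le> 2 * a + \<bar>dX j - dY j\<bar>"
    if "j < n" for j
  proof -
    have "ldist (cX i @ cX j @ [dX j]) (cY i @ cY j @ [dY j])
        \<le> ldist (cX i) (cY i) + (ldist (cX j) (cY j) + ldist [dX j] [dY j])"
      using assms(1) \<open>i < n\<close> \<open>j < n\<close>
      by (meson add_left_mono ldist_append_le order_trans)
    moreover have "ldist (cX i) (cY i) \<le> a" "ldist (cX j) (cY j) \<le> a"
      using assms(2) \<open>i < n\<close> \<open>j < n\<close> by auto
    ultimately show ?thesis
      by (simp add: ldist_singleton)
  qed
  have "mdist (map (\<lambda>j. cX i @ cX j @ [dX j]) [0..<n]) (map (\<lambda>j. cY i @ cY j @ [dY j]) [0..<n])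
      \<le> (\<Sum>j<n. ldist (cX i @ cX j @ [dX j]) (cY i @ cY j @ [dY j]))"
    by (rule mdist_map_le_sum)
  also have "\<dots> \<le> (\<Sum>j<n. 2 * a + \<bar>dX j - dY j\<bar>)"
    by (rule sum_mono) (simp add: row)
  also have "\<dots> = 2 * real n * a + (\<Sum>j<n. \<bar>dX j - dY j\<bar>)"
    by (simp add: sum.distrib)
  finally show ?thesis .
qed

locale wl_lipschitz =
  fixes n T :: nat
    and k mm :: "nat \<Rightarrow> nat"
    and psi :: "nat \<Rightarrow> real list list \<Rightarrow> real list"
    and phi :: "nat \<Rightarrow> real list \<Rightarrow> real list"
  assumes psi_ms: "\<And>t. t < T \<Longrightarrow> multiset_fun (2 * k t + 1) n (mm t) (psi t)"
    and psi_lip: "\<And>t. t < T \<Longrightarrow> lipschitz_mat (2 * k t + 1) n (psi t)"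
    and phi_fun: "\<And>t. t < T \<Longrightarrow> euclid_fun (k t + mm t) (k (Suc t)) (phi t)"
    and phi_lip: "\<And>t. t < T \<Longrightarrow> lipschitz_vec (k t + mm t) (phi t)"
begin

abbreviation color :: "(nat \<Rightarrow> real^'d) \<Rightarrow> nat \<Rightarrow> nat \<Rightarrow> real list" where
  "color \<equiv> wl_color k psi phi n"

abbreviation messages :: "(nat \<Rightarrow> real^'d) \<Rightarrow> nat \<Rightarrow> nat \<Rightarrow> real list list" where
  "messages X t i \<equiv> map (\<lambda>j. color X t i @ color X t j @ [dist (X i) (X j)]) [0..<n]"

lemma length_color: "t \<le> T \<Longrightarrow> length (color X t i) = k t"
proof (induction t arbitrary: i)
  case (Suc t)
  then have t: "t < T" and IH: "\<And>j. length (color X t j) = k t"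
    by auto
  then have "is_matrix (2 * k t + 1) n (messages X t i)"
    by (auto simp: is_matrix_def)
  then have "length (psi t (messages X t i)) = mm t"
    using psi_ms[OF t] unfolding multiset_fun_def by blast
  then show ?case
    using phi_fun[OF t] IH unfolding euclid_fun_def by simp
qed simp

lemma messages_is_matrix: "t \<le> T \<Longrightarrow> is_matrix (2 * k t + 1) n (messages X t i)"
  by (auto simp: is_matrix_def length_color)

lemma length_psi_messages:
  assumes "t < T"
  shows "length (psi t (messages X t i)) = mm t"
proof -
  have "is_matrix (2 * k t + 1) n (messages X t i)"
    using assms by (intro messages_is_matrix) simp
  then show ?thesis
    using psi_ms[OF assms] unfolding multiset_fun_def by blast
qed

lemma color_permutes:
  assumes "\<pi> permutes {..<n}" "t \<le> T" "i < n"
  shows "color (Y \<circ> \<pi>) t i = color Y t (\<pi> i)"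
  using assms(2,3)
proof (induction t arbitrary: i)
  case (Suc t)
  then have t: "t < T" and i: "i < n"
    by auto
  note IH = Suc.IH[OF less_imp_le[OF t]]
  define h where "h = (\<lambda>j. color Y t (\<pi> i) @ color Y t j @ [dist (Y (\<pi> i)) (Y j)])"
  have msg: "messages (Y \<circ> \<pi>) t i = map (h \<circ> \<pi>) [0..<n]"
    unfolding h_def by (rule map_cong) (auto simp: IH i)
  have "is_matrix (2 * k t + 1) n (map (h \<circ> \<pi>) [0..<n])" "is_matrix (2 * k t + 1) n (map h [0..<n])"
    using t by (auto simp: is_matrix_def h_def length_color)
  then have psi_eq: "psi t (map (h \<circ> \<pi>) [0..<n]) = psi t (map h [0..<n])"
    using psi_ms[OF t] mset_map_permutes[OF assms(1)] unfolding multiset_fun_def by blast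
  have "color (Y \<circ> \<pi>) (Suc t) i = phi t (color Y t (\<pi> i) @ psi t (map (h \<circ> \<pi>) [0..<n]))"
    by (subst wl_color.simps(2), subst msg, subst IH[OF i]) (rule refl)
  also have "\<dots> = color Y (Suc t) (\<pi> i)"
    unfolding psi_eq by (simp add: h_def)
  finally show ?case .
qed simp

lemma color_Suc_dist_le:
  assumes t: "t < T" and i: "i < n"
    and Lphi: "Lphi \<ge> 0" "\<And>x y. length x = k t + mm t \<Longrightarrow> length y = k t + mm t \<Longrightarrow>
      ldist (phi t x) (phi t y) \<le> Lphi * ldist x y"
    and Lpsi: "Lpsi \<ge> 0" "\<And>A B. is_matrix (2 * k t + 1) n A \<Longrightarrow> is_matrix (2 * k t + 1) n B \<Longrightarrow>
      ldist (psi t A) (psi t B) \<le> Lpsi * mdist A B"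
    and close: "\<And>j. j < n \<Longrightarrow> ldist (color X t j) (color Y t j) \<le> a"
  shows "ldist (color X (Suc t) i) (color Y (Suc t) i)
           \<le> Lphi * (a + Lpsi * (2 * real n * a + (\<Sum>j<n. \<bar>dist (X i) (X j) - dist (Y i) (Y j)\<bar>)))"
proof -
  let ?x = "color X t i @ psi t (messages X t i)" and ?y = "color Y t i @ psi t (messages Y t i)"
  have "ldist (psi t (messages X t i)) (psi t (messages Y t i))
      \<le> Lpsi * mdist (messages X t i) (messages Y t i)"
    by (intro Lpsi(2) messages_is_matrix) (simp_all add: less_imp_le t)
  also have "\<dots> \<le> Lpsi * (2 * real n * a + (\<Sum>j<n. \<bar>dist (X i) (X j) - dist (Y i) (Y j)\<bar>))"
    using t
    by (intro mult_left_mono message_matrix_mdist_le close i Lpsi(1)) (simp add: length_color)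
  finally have "ldist ?x ?y
      \<le> a + Lpsi * (2 * real n * a + (\<Sum>j<n. \<bar>dist (X i) (X j) - dist (Y i) (Y j)\<bar>))"
    using t close[OF i] order_trans[OF ldist_append_le] by (simp add: length_color add_mono)
  moreover have "ldist (color X (Suc t) i) (color Y (Suc t) i) \<le> Lphi * ldist ?x ?y"
    using t by (simp add: Lphi(2) length_color length_psi_messages)
  ultimately show ?thesis
    using Lphi(1) by (meson mult_left_mono order_trans)
qed

lemma color_dist_le_distortion:
  assumes "t \<le> T"
  shows "\<exists>M\<ge>0. \<forall>(X :: nat \<Rightarrow> real^'d) Y i. i < n \<longrightarrow>
           ldist (color X t i) (color Y t i) \<le> M * distortion n X Y"
  using assms
proof (induction t)
  case 0
  show ?case by (auto simp: ldist_self)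
next
  case (Suc t)
  then have t: "t < T" by simp
  obtain M where M: "M \<ge> 0"
    and IH: "\<And>(X :: nat \<Rightarrow> real^'d) Y i. i < n \<Longrightarrow>
      ldist (color X t i) (color Y t i) \<le> M * distortion n X Y"
    using Suc.IH t by auto
  obtain Lphi where Lphi: "Lphi \<ge> 0" "\<And>x y. length x = k t + mm t \<Longrightarrow> length y = k t + mm t \<Longrightarrow>
      ldist (phi t x) (phi t y) \<le> Lphi * ldist x y"
    using lipschitz_vec_nonneg_const[OF phi_lip[OF t]] by auto
  obtain Lpsi where Lpsi: "Lpsi \<ge> 0"
      "\<And>A B. is_matrix (2 * k t + 1) n A \<Longrightarrow> is_matrix (2 * k t + 1) n B \<Longrightarrow>
        ldist (psi t A) (psi t B) \<le> Lpsi * mdist A B"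
    using lipschitz_mat_nonneg_const[OF psi_lip[OF t]] by auto
  have "ldist (color X (Suc t) i) (color Y (Suc t) i)
      \<le> Lphi * (M + Lpsi * (2 * real n * M + 1)) * distortion n X Y"
    if i: "i < n" for X Y :: "nat \<Rightarrow> real^'d" and i
  proof -
    let ?D = "distortion n X Y"
    have "ldist (color X (Suc t) i) (color Y (Suc t) i)
        \<le> Lphi * (M * ?D + Lpsi * (2 * real n * (M * ?D) +
                 (\<Sum>j<n. \<bar>dist (X i) (X j) - dist (Y i) (Y j)\<bar>)))"
      by (rule color_Suc_dist_le[OF t i Lphi Lpsi IH])
    also have "\<dots> \<le> Lphi * (M * ?D + Lpsi * (2 * real n * (M * ?D) + ?D))"
      using distortion_row_le[OF i] Lphi(1) Lpsi(1) by (intro mult_left_mono add_left_mono) simp_all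
    also have "\<dots> = Lphi * (M + Lpsi * (2 * real n * M + 1)) * ?D"
      by (simp add: algebra_simps)
    finally show ?thesis .
  qed
  moreover have "Lphi * (M + Lpsi * (2 * real n * M + 1)) \<ge> 0"
    using M Lphi(1) Lpsi(1) by simp
  ultimately show ?case
    by blast
qed

lemma wl_model_permutes:
  assumes "multiset_fun (k T) n m readout" "\<pi> permutes {..<n}"
  shows "wl_model k psi phi readout T n (Y \<circ> \<pi>) = wl_model k psi phi readout T n Y"
proof -
  have "map (color (Y \<circ> \<pi>) T) [0..<n] = map (color Y T \<circ> \<pi>) [0..<n]"
    by (simp add: color_permutes[OF assms(2) order_refl])
  moreover have "is_matrix (k T) n (map (color Y T \<circ> \<pi>) [0..<n])"
    "is_matrix (k T) n (map (color Y T) [0..<n])"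
    by (auto simp: is_matrix_def length_color)
  ultimately show ?thesis
    using assms(1) mset_map_permutes[OF assms(2)] unfolding wl_model_def multiset_fun_def by metis
qed

lemma wl_model_lipschitz_distortion:
  assumes "lipschitz_mat (k T) n readout"
  shows "\<exists>L>0. \<forall>X Y :: nat \<Rightarrow> real^'d.
           ldist (wl_model k psi phi readout T n X) (wl_model k psi phi readout T n Y)
             \<le> L * distortion n X Y"
proof -
  obtain M where M: "\<And>(X :: nat \<Rightarrow> real^'d) Y i. i < n \<Longrightarrow>
      ldist (color X T i) (color Y T i) \<le> M * distortion n X Y"
    using color_dist_le_distortion[of T] by auto
  obtain Lro where Lro: "Lro \<ge> 0" "\<And>A B. is_matrix (k T) n A \<Longrightarrow> is_matrix (k T) n B \<Longrightarrow>
      ldist (readout A) (readout B) \<le> Lro * mdist A B"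
    using lipschitz_mat_nonneg_const[OF assms] by auto
  have "ldist (wl_model k psi phi readout T n X) (wl_model k psi phi readout T n Y)
      \<le> max 1 (Lro * real n * M) * distortion n X Y" for X Y :: "nat \<Rightarrow> real^'d"
  proof -
    have "ldist (wl_model k psi phi readout T n X) (wl_model k psi phi readout T n Y)
        \<le> Lro * mdist (map (color X T) [0..<n]) (map (color Y T) [0..<n])"
      unfolding wl_model_def by (rule Lro(2)) (auto simp: is_matrix_def length_color)
    also have "\<dots> \<le> Lro * (\<Sum>i<n. ldist (color X T i) (color Y T i))"
      using Lro(1) by (intro mult_left_mono mdist_map_le_sum)
    also have "\<dots> \<le> Lro * (\<Sum>i<n. M * distortion n X Y)"
      using Lro(1) M by (intro mult_left_mono sum_mono) auto
    also have "\<dots> \<le> max 1 (Lro * real n * M) * distortion n X Y"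
      by (simp add: mult.assoc[symmetric] mult_right_mono distortion_nonneg)
    finally show ?thesis .
  qed
  then show ?thesis
    by (intro exI[of _ "max 1 (Lro * real n * M)"]) auto
qed

end

theorem theorem3:
  fixes n T m :: nat
    and k mm :: "nat \<Rightarrow> nat"
    and psi :: "nat \<Rightarrow> real list list \<Rightarrow> real list"
    and phi :: "nat \<Rightarrow> real list \<Rightarrow> real list"
    and readout :: "real list list \<Rightarrow> real list"
  assumes "n > 0" and "T > 0"
    and psi_ms: "\<And>t. t < T \<Longrightarrow> multiset_fun (2 * k t + 1) n (mm t) (psi t)"
    and psi_lip: "\<And>t. t < T \<Longrightarrow> lipschitz_mat (2 * k t + 1) n (psi t)"
    and phi_fun: "\<And>t. t < T \<Longrightarrow> euclid_fun (k t + mm t) (k (Suc t)) (phi t)"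
    and phi_lip: "\<And>t. t < T \<Longrightarrow> lipschitz_vec (k t + mm t) (phi t)"
    and ro_ms: "multiset_fun (k T) n m readout"
    and ro_lip: "lipschitz_mat (k T) n readout"
  shows "\<exists>L>0. \<forall>X Y :: nat \<Rightarrow> real^'d.
           ldist (wl_model k psi phi readout T n X) (wl_model k psi phi readout T n Y)
             \<le> L * hard_GW n X Y"
proof -
  interpret wl_lipschitz n T k mm psi phi
    using psi_ms psi_lip phi_fun phi_lip by unfold_locales
  obtain L where "L > 0" and L: "\<And>X Y :: nat \<Rightarrow> real^'d.
      ldist (wl_model k psi phi readout T n X) (wl_model k psi phi readout T n Y)
        \<le> L * distortion n X Y"
    using wl_model_lipschitz_distortion[OF ro_lip] by blast
  have "ldist (wl_model k psi phi readout T n X) (wl_model k psi phi readout T n Y)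
      \<le> L * hard_GW n X Y" for X Y :: "nat \<Rightarrow> real^'d"
  proof -
    obtain \<pi> where \<pi>: "\<pi> permutes {..<n}" "hard_GW n X Y = distortion n X (Y \<circ> \<pi>)"
      using hard_GW_attained by blast
    have "ldist (wl_model k psi phi readout T n X) (wl_model k psi phi readout T n Y)
        = ldist (wl_model k psi phi readout T n X) (wl_model k psi phi readout T n (Y \<circ> \<pi>))"
      by (simp add: wl_model_permutes[OF ro_ms \<pi>(1)])
    also have "\<dots> \<le> L * distortion n X (Y \<circ> \<pi>)"
      by (rule L)
    finally show ?thesis
      by (simp add: \<pi>(2))
  qed
  with \<open>L > 0\<close> show ?thesis by blast
qed

end
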